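(* Let $E$ be a Prohorov space. For $t\ge0$ and $x\in E$ let $\mu_t(x,\cdot)\in M_\kappa^+(E)$ be such that $x\mapsto\mu_t(x,B)$ is $\mathscr B(E)$-measurable for all $B\in\mathscr B(E)$, $t\ge0$, and $\mu_0(x,\cdot)=\delta_x$ for all $x\in E$. Suppose that for every $T\ge0$, $\sup_{t\le T}\sup_{x\in E}\big(\kappa(x)\int_E\kappa(y)^{-1}\,\mu_t(x,dy)\big)<\infty$, and that for every $T\in(0,\infty)$, every compact $C\subset E$ and every $\varphi\in C_\kappa(E)$ the map $[0,T]\times C\ni(t,x)\mapsto\int_E\varphi(y)\,\mu_t(x,dy)$ is continuous. Then: (4) for every $T\ge0$ and every compact $C\subset E$ the family $\{\kappa(x)\kappa(y)^{-1}\mu_t(x,dy)\colon x\in C,\ t\in[0,T]\}$ is tight; and (5) for every $x\in E$, every sequence $x_n\to x$ and every sequence $t_n\ge 0$, $t_n\to0$, one has $\mu_{t_n}(x_n,\cdot)\to\delta_x$ narrowly in $M_\kappa(E)$.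
   Context: Standing assumptions and notation. $E$ is a completely regular Hausdorff topological space such that (1) every compact subset of $E$ is metrizable, (2) the Borel $\sigma$-algebra $\mathscr B(E)$ equals the Baire $\sigma$-algebra of $E$, and (3) a function $\varphi\colon E\to\mathbb R$ is continuous if and only if its restriction to every compact subset of $E$ is continuous. $\kappa\colon E\to(0,\infty)$ is a continuous weight function. $C_\kappa(E)$ denotes the space of continuous $\varphi\colon E\to\mathbb R$ with $\|\varphi\|_\kappa:=\sup_{x\in E}|\kappa(x)\varphi(x)|<\infty$. $M_\kappa(E)$ denotes the space of signed Radon measures $\mu$ on $(E,\mathscr B(E))$ (i.e. $|\mu|(E)<\infty$ and for every Borel $B$ and $\varepsilon>0$ there is a compact $C\subset B$ with $|\mu|(B\setminus C)<\varepsilon$) such that $\int_E\kappa^{-1}\,d|\mu|<\infty$; $M_\kappa^+(E)$ denotes its nonnegative elements; $M_\kappa(E)$ carries the narrow topology, the weakest topology making $\mu\mapsto\int\varphi\,d\mu$ continuous for every $\varphi\in C_\kappa(E)$. $M_b^+(E)$ is $M_1^+(E)$ (finite nonnegative Radon measures) with the narrow topology induced by bounded continuous functions. A family $\mathcal F$ of measures is tight if for every $\varepsilon>0$ there is a compact $C_\varepsilon\subset E$ with $\sup_{\mu\in\mathcal F}|\mu|(E\setminus C_\varepsilon)<\varepsilon$. $E$ is called a Prohorov space if every compact subset of $M_b^+(E)$ (narrow topology) is tight. *)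

theory Defs
  imports "HOL-Analysis.Analysis" "HOL-Probability.Probability"
begin

definition standing_space :: "'a::topological_space itself \<Rightarrow> bool" where
  "standing_space _ \<longleftrightarrow>
     completely_regular_space (euclidean :: 'a topology) \<and>
     Hausdorff_space (euclidean :: 'a topology) \<and>
     (\<forall>C::'a set. compact C \<longrightarrow> metrizable_space (subtopology euclidean C)) \<and>
     sets (borel :: 'a measure) =
       sigma_sets UNIV {f -` U | (f :: 'a \<Rightarrow> real) U. continuous_on UNIV f \<and> open U} \<and>
     (\<forall>f :: 'a \<Rightarrow> real. continuous_on UNIV f \<longleftrightarrow> (\<forall>C. compact C \<longrightarrow> continuous_on C f))"

definition weight :: "('a::topological_space \<Rightarrow> real) \<Rightarrow> bool" where
  "weight \<kappa> \<longleftrightarrow> continuous_on UNIV \<kappa> \<and> (\<forall>x. \<kappa> x > 0)"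

definition C_kappa :: "('a::topological_space \<Rightarrow> real) \<Rightarrow> ('a \<Rightarrow> real) set" where
  "C_kappa \<kappa> = {\<phi>. continuous_on UNIV \<phi> \<and> (\<exists>B. \<forall>x. \<bar>\<kappa> x * \<phi> x\<bar> \<le> B)}"

definition radon_pos :: "'a::topological_space measure \<Rightarrow> bool" where
  "radon_pos M \<longleftrightarrow> sets M = sets borel \<and> emeasure M UNIV < \<infinity> \<and>
     (\<forall>B \<in> sets borel. \<forall>e>0. \<exists>C. compact C \<and> C \<subseteq> B \<and> emeasure M (B - C) < ennreal e)"

definition M_kappa_pos :: "('a::topological_space \<Rightarrow> real) \<Rightarrow> 'a measure set" where
  "M_kappa_pos \<kappa> = {M. radon_pos M \<and> (\<integral>\<^sup>+ y. ennreal (1 / \<kappa> y) \<partial>M) < \<infinity>}"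

definition tight :: "'a::topological_space measure set \<Rightarrow> bool" where
  "tight F \<longleftrightarrow> (\<forall>e>0. \<exists>K. compact K \<and> (SUP M\<in>F. emeasure M (UNIV - K)) < ennreal e)"

definition M_b_pos :: "'a::topological_space measure set" where
  "M_b_pos = {M. radon_pos M}"

definition narrow_top_b :: "'a::topological_space measure topology" where
  "narrow_top_b = subtopology
     (topology_generated_by
        {{M \<in> M_b_pos. (\<integral> y. \<phi> y \<partial>M) \<in> U} | \<phi> U.
           continuous_on UNIV \<phi> \<and> bounded (range \<phi>) \<and> open (U :: real set)})
     M_b_pos"

definition prohorov_space :: "'a::topological_space itself \<Rightarrow> bool" where
  "prohorov_space _ \<longleftrightarrow>
     (\<forall>K :: 'a measure set. compactin narrow_top_b K \<longrightarrow> tight K)"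

text \<open>Narrow convergence of a sequence in M_kappa(E): convergence in the weakest
  topology making all maps M -> integral phi dM (phi in C_kappa) continuous.\<close>
definition narrow_conv_kappa ::
  "('a::topological_space \<Rightarrow> real) \<Rightarrow> (nat \<Rightarrow> 'a measure) \<Rightarrow> 'a measure \<Rightarrow> bool" where
  "narrow_conv_kappa \<kappa> Ms M \<longleftrightarrow>
     (\<forall>\<phi> \<in> C_kappa \<kappa>. (\<lambda>n. \<integral> y. \<phi> y \<partial>(Ms n)) \<longlonglongrightarrow> (\<integral> y. \<phi> y \<partial>M))"

end

theory Submission
  imports Defs
begin

text \<open>The measures \<open>\<kappa>(x)\<kappa>(y)\<^sup>-\<^sup>1\<mu>\<^sub>t(x,dy)\<close> are finite Radon measures, and for bounded
  continuous \<open>\<phi>\<close> their integrals equal \<open>\<kappa>(x) \<integral> \<phi>/\<kappa> d\<mu>\<^sub>t(x,\<cdot>)\<close> with \<open>\<phi>/\<kappa> \<in> C\<^sub>\<kappa>(E)\<close>.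
  The continuity hypothesis therefore makes \<open>(t,x) \<mapsto> \<kappa>(x)\<kappa>(y)\<^sup>-\<^sup>1\<mu>\<^sub>t(x,dy)\<close> narrowly
  continuous on \<open>[0,T] \<times> C\<close>; its image is compact, hence tight because \<open>E\<close> is a Prohorov space.
  Narrow convergence to \<open>\<delta>\<^sub>x\<close> is continuity at \<open>(0,x)\<close> on the compact set \<open>[0,1] \<times> {x, x\<^sub>1, x\<^sub>2, \<dots>}\<close>.\<close>

lemma nn_integral_upper_tail_small:
  fixes g :: "'a \<Rightarrow> real"
  assumes [measurable]: "g \<in> borel_measurable M"
    and fin: "(\<integral>\<^sup>+ y. ennreal (g y) \<partial>M) < \<infinity>" and "e > 0"
  shows "\<exists>N::nat. (\<integral>\<^sup>+ y. ennreal (g y) * indicator {y. g y > real N} y \<partial>M) < ennreal e"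
proof -
  define h where "h = (\<lambda>(N::nat) y. ennreal (g y) * indicator {y. g y > real N} y)"
  have "decseq h"
    by (intro decseq_SucI le_funI) (auto simp: h_def indicator_def)
  moreover have "h N \<in> borel_measurable M" for N
    unfolding h_def by measurable
  moreover have "(\<integral>\<^sup>+ y. h N y \<partial>M) < \<infinity>" for N
  proof -
    have "(\<integral>\<^sup>+ y. h N y \<partial>M) \<le> (\<integral>\<^sup>+ y. ennreal (g y) \<partial>M)"
      unfolding h_def by (intro nn_integral_mono) (auto simp: indicator_def)
    then show ?thesis using fin by (simp add: le_less_trans)
  qed
  moreover have "(INF N. h N y) = 0" for y
  proof -
    obtain N :: nat where "g y \<le> real N" using real_arch_simple by blast
    then have "h N y = 0" by (auto simp: h_def indicator_def)
    then show ?thesis by (metis INF_lower UNIV_I bot.extremum_uniqueI bot_ennreal)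
  qed
  ultimately have "(INF N. integral\<^sup>N M (h N)) = 0"
    using nn_integral_monotone_convergence_INF_decseq[of h M] by simp
  then have "(INF N. integral\<^sup>N M (h N)) < ennreal e" using \<open>e > 0\<close> by simp
  then obtain N where "integral\<^sup>N M (h N) < ennreal e" by (auto simp: INF_less_iff)
  then show ?thesis unfolding h_def by blast
qed

lemma radon_pos_density:
  fixes g :: "'a::topological_space \<Rightarrow> real"
  assumes M: "radon_pos M" and g[measurable]: "g \<in> borel_measurable borel"
    and fin: "(\<integral>\<^sup>+ y. ennreal (g y) \<partial>M) < \<infinity>"
    and H: "Hausdorff_space (euclidean :: 'a topology)"
  shows "radon_pos (density M (\<lambda>y. ennreal (g y)))"
proof -
  have sM: "sets M = sets borel" using M by (simp add: radon_pos_def)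
  have gM[measurable]: "g \<in> borel_measurable M" using g by (simp add: measurable_cong_sets[OF sM refl])
  have "emeasure (density M (\<lambda>y. ennreal (g y))) UNIV = (\<integral>\<^sup>+ y. ennreal (g y) \<partial>M)"
    using sM by (simp add: emeasure_density)
  moreover have "\<exists>C. compact C \<and> C \<subseteq> B \<and> emeasure (density M (\<lambda>y. ennreal (g y))) (B - C) < ennreal e"
    if B: "B \<in> sets borel" and e: "e > 0" for B e
  proof -
    text \<open>Cut \<open>g\<close> at a level \<open>N\<close> with tail mass \<open>< e/2\<close>, then approximate \<open>B\<close> from inside
      in \<open>M\<close>-measure up to \<open>e/(2(N+1))\<close>.\<close>
    obtain N :: nat where N: "(\<integral>\<^sup>+ y. ennreal (g y) * indicator {y. g y > real N} y \<partial>M) < ennreal (e/2)"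
      using nn_integral_upper_tail_small[OF gM fin, of "e/2"] e by auto
    have "e / (2 * (real N + 1)) > 0" using e by simp
    then obtain C where C: "compact C" "C \<subseteq> B" and mC: "emeasure M (B - C) < ennreal (e / (2 * (real N + 1)))"
      using M B unfolding radon_pos_def by blast
    have "closed C"
      using compactin_imp_closedin[OF H, of C] C(1) closed_closedin compactin_euclidean_iff by metis
    then have BC: "B - C \<in> sets M" using B sM by auto
    have "ennreal (real N) * emeasure M (B - C) \<le> ennreal (real N) * ennreal (e / (2 * (real N + 1)))"
      using mC by (intro mult_left_mono) auto
    also have "\<dots> = ennreal (real N * (e / (2 * (real N + 1))))"
      using e by (subst ennreal_mult) auto
    also have "\<dots> \<le> ennreal (e/2)"
    proof (rule ennreal_leI)
      have "real N * (e / (2 * (real N + 1))) = (e/2) * (real N / (real N + 1))" by (simp add: field_simps)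
      also have "\<dots> \<le> e/2" using e by (intro mult_left_le) auto
      finally show "real N * (e / (2 * (real N + 1))) \<le> e/2" .
    qed
    finally have small: "ennreal (real N) * emeasure M (B - C) \<le> ennreal (e/2)" .
    have "emeasure (density M (\<lambda>y. ennreal (g y))) (B - C) = (\<integral>\<^sup>+ y. ennreal (g y) * indicator (B - C) y \<partial>M)"
      using BC by (simp add: emeasure_density)
    also have "\<dots> \<le> (\<integral>\<^sup>+ y. ennreal (real N) * indicator (B - C) y + ennreal (g y) * indicator {y. g y > real N} y \<partial>M)"
      by (intro nn_integral_mono) (auto simp: indicator_def)
    also have "\<dots> = ennreal (real N) * emeasure M (B - C) + (\<integral>\<^sup>+ y. ennreal (g y) * indicator {y. g y > real N} y \<partial>M)"
      using BC by (simp add: nn_integral_add nn_integral_cmult_indicator)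
    also have "\<dots> \<le> ennreal (e/2) + (\<integral>\<^sup>+ y. ennreal (g y) * indicator {y. g y > real N} y \<partial>M)"
      by (rule add_right_mono[OF small])
    also have "\<dots> < ennreal (e/2) + ennreal (e/2)"
      using N by (simp only: ennreal_add_left_cancel_less) simp
    also have "\<dots> = ennreal e" using e by (simp flip: ennreal_plus)
    finally show ?thesis using C by blast
  qed
  ultimately show ?thesis using fin sM by (simp add: radon_pos_def)
qed

lemma weight_pos: "weight \<kappa> \<Longrightarrow> \<kappa> y > 0"
  by (simp add: weight_def)

lemma borel_measurable_weight: "weight \<kappa> \<Longrightarrow> \<kappa> \<in> borel_measurable borel"
  by (simp add: weight_def borel_measurable_continuous_onI)

lemma density_weight_ratio_in_M_b_pos:
  assumes \<kappa>: "weight \<kappa>" and M: "M \<in> M_kappa_pos \<kappa>"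
    and H: "Hausdorff_space (euclidean :: 'a::topological_space topology)"
  shows "density M (\<lambda>y. ennreal (\<kappa> x / \<kappa> y)) \<in> (M_b_pos :: 'a measure set)"
proof -
  have sM: "sets M = sets borel" using M by (simp add: M_kappa_pos_def radon_pos_def)
  have [measurable]: "\<kappa> \<in> borel_measurable M"
    using borel_measurable_weight[OF \<kappa>] by (simp add: measurable_cong_sets[OF sM refl])
  have "(\<integral>\<^sup>+ y. ennreal (\<kappa> x / \<kappa> y) \<partial>M) = (\<integral>\<^sup>+ y. ennreal (\<kappa> x) * ennreal (1 / \<kappa> y) \<partial>M)"
    using weight_pos[OF \<kappa>] by (intro nn_integral_cong) (simp add: ennreal_mult[symmetric] less_imp_le)
  also have "\<dots> = ennreal (\<kappa> x) * (\<integral>\<^sup>+ y. ennreal (1 / \<kappa> y) \<partial>M)"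
    by (rule nn_integral_cmult) measurable
  also have "\<dots> < \<infinity>" using M by (simp add: M_kappa_pos_def ennreal_mult_less_top)
  finally have "(\<integral>\<^sup>+ y. ennreal (\<kappa> x / \<kappa> y) \<partial>M) < \<infinity>" .
  moreover have "(\<lambda>y. \<kappa> x / \<kappa> y) \<in> borel_measurable borel"
    using borel_measurable_weight[OF \<kappa>] by measurable
  ultimately show ?thesis
    using radon_pos_density[OF _ _ _ H] M by (simp add: M_kappa_pos_def M_b_pos_def)
qed

lemma integral_density_weight_ratio:
  assumes \<kappa>: "weight \<kappa>" and sM: "sets M = sets borel"
    and \<phi>: "\<phi> \<in> borel_measurable borel"
  shows "(\<integral> y. \<phi> y \<partial>density M (\<lambda>y. ennreal (\<kappa> x / \<kappa> y))) = \<kappa> x * (\<integral> y. \<phi> y / \<kappa> y \<partial>M)"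
proof -
  have [measurable]: "\<kappa> \<in> borel_measurable M" "\<phi> \<in> borel_measurable M"
    using borel_measurable_weight[OF \<kappa>] \<phi> by (simp_all add: measurable_cong_sets[OF sM refl])
  have "(\<integral> y. \<phi> y \<partial>density M (\<lambda>y. ennreal (\<kappa> x / \<kappa> y))) = (\<integral> y. (\<kappa> x / \<kappa> y) *\<^sub>R \<phi> y \<partial>M)"
    using weight_pos[OF \<kappa>] by (intro integral_density AE_I2) (auto simp: less_imp_le)
  also have "\<dots> = \<kappa> x * (\<integral> y. \<phi> y / \<kappa> y \<partial>M)"
    by (simp add: integral_mult_right_zero[symmetric])
  finally show ?thesis .
qed

lemma divide_weight_in_C_kappa:
  assumes \<kappa>: "weight \<kappa>" and "continuous_on UNIV \<phi>" and "bounded (range \<phi>)"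
  shows "(\<lambda>y. \<phi> y / \<kappa> y) \<in> C_kappa \<kappa>"
proof -
  have "continuous_on UNIV (\<lambda>y. \<phi> y / \<kappa> y)"
    using assms weight_pos[OF \<kappa>] by (intro continuous_on_divide) (auto simp: weight_def less_imp_neq[symmetric])
  moreover obtain B where "\<forall>y. \<bar>\<phi> y\<bar> \<le> B" using \<open>bounded (range \<phi>)\<close> by (auto simp: bounded_iff)
  then have "\<forall>y. \<bar>\<kappa> y * (\<phi> y / \<kappa> y)\<bar> \<le> B" using weight_pos[OF \<kappa>] by (simp add: less_imp_neq[symmetric])
  ultimately show ?thesis unfolding C_kappa_def by blast
qed

lemma tight_subset: "F \<subseteq> G \<Longrightarrow> tight G \<Longrightarrow> tight F"
  unfolding tight_def by (meson SUP_subset_mono order_refl le_less_trans)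

lemma continuous_map_narrow_top_bI:
  fixes f :: "'b::topological_space \<Rightarrow> 'a::topological_space measure"
  assumes in_M_b: "\<And>p. p \<in> S \<Longrightarrow> f p \<in> M_b_pos"
    and cont: "\<And>\<phi> :: 'a \<Rightarrow> real. continuous_on UNIV \<phi> \<Longrightarrow> bounded (range \<phi>) \<Longrightarrow>
                 continuous_on S (\<lambda>p. \<integral> y. \<phi> y \<partial>f p)"
  shows "continuous_map (top_of_set S) narrow_top_b f"
proof -
  define \<S> where "\<S> = {{M \<in> (M_b_pos :: 'a measure set). (\<integral> y. (\<phi> y :: real) \<partial>M) \<in> U} | \<phi> U.
           continuous_on UNIV \<phi> \<and> bounded (range \<phi>) \<and> open (U :: real set)}"
  show ?thesis
    unfolding narrow_top_b_def continuous_map_in_subtopology \<S>_def[symmetric]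
  proof (intro conjI continuous_on_generated_topo)
    fix U assume "U \<in> \<S>"
    then obtain \<phi> :: "'a \<Rightarrow> real" and V where U: "U = {M \<in> M_b_pos. (\<integral> y. \<phi> y \<partial>M) \<in> V}"
      and \<phi>: "continuous_on UNIV \<phi>" "bounded (range \<phi>)" and V: "open V"
      unfolding \<S>_def by blast
    have "f -` U \<inter> topspace (top_of_set S) = S \<inter> (\<lambda>p. \<integral> y. \<phi> y \<partial>f p) -` V"
      using in_M_b by (auto simp: U)
    moreover have "openin (top_of_set S) (S \<inter> (\<lambda>p. \<integral> y. \<phi> y \<partial>f p) -` V)"
      using continuous_openin_preimage[OF cont[OF \<phi>], of UNIV V] V by auto
    ultimately show "openin (top_of_set S) (f -` U \<inter> topspace (top_of_set S))" by simp
  next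
    have "M_b_pos \<in> \<S>"
      unfolding \<S>_def by (rule CollectI, rule exI[of _ "\<lambda>_. 0"], rule exI[of _ UNIV]) auto
    then show "f ` topspace (top_of_set S) \<subseteq> \<Union> \<S>" using in_M_b by auto
  qed (use in_M_b in auto)
qed

lemma prohorov_space_tight_image:
  assumes "prohorov_space TYPE('a::topological_space)" and "compact S"
    and "continuous_map (top_of_set S) narrow_top_b (f :: 'b::topological_space \<Rightarrow> 'a measure)"
  shows "tight (f ` S)"
proof -
  have "compactin (top_of_set S) S" using \<open>compact S\<close> by (simp add: compactin_subtopology)
  then have "compactin narrow_top_b (f ` S)" using assms(3) by (rule image_compactin)
  then show ?thesis using assms(1) by (simp add: prohorov_space_def)
qed

lemma tight_weighted_kernel:
  fixes \<kappa> :: "'a::topological_space \<Rightarrow> real" and \<mu> :: "real \<Rightarrow> 'a \<Rightarrow> 'a measure"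
  assumes H: "Hausdorff_space (euclidean :: 'a topology)" and \<kappa>: "weight \<kappa>"
    and prohorov: "prohorov_space TYPE('a)"
    and mu_in: "\<And>t x. t \<ge> 0 \<Longrightarrow> \<mu> t x \<in> M_kappa_pos \<kappa>"
    and cont: "\<And>T C \<phi>. T > 0 \<Longrightarrow> compact C \<Longrightarrow> \<phi> \<in> C_kappa \<kappa> \<Longrightarrow>
        continuous_on ({0..T} \<times> C) (\<lambda>(t, x). \<integral> y. \<phi> y \<partial>(\<mu> t x))"
    and "T \<ge> 0" and C: "compact C"
  shows "tight ((\<lambda>(t, x). density (\<mu> t x) (\<lambda>y. ennreal (\<kappa> x / \<kappa> y))) ` ({0..T} \<times> C))"
proof -
  define \<nu> where "\<nu> = (\<lambda>(t, x). density (\<mu> t x) (\<lambda>y. ennreal (\<kappa> x / \<kappa> y)))"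
  define S where "S = {0..T + 1} \<times> C"
  have \<nu>_in: "\<nu> p \<in> M_b_pos" if "p \<in> S" for p
  proof -
    have "fst p \<ge> 0" using that by (auto simp: S_def)
    from density_weight_ratio_in_M_b_pos[OF \<kappa> mu_in[OF this] H]
    show ?thesis by (simp add: \<nu>_def case_prod_beta)
  qed
  have "continuous_on S (\<lambda>p. \<integral> y. \<phi> y \<partial>\<nu> p)"
    if \<phi>: "continuous_on UNIV \<phi>" "bounded (range \<phi>)" for \<phi> :: "'a \<Rightarrow> real"
  proof -
    have "continuous_on S (\<lambda>p. \<kappa> (snd p) * (\<integral> y. \<phi> y / \<kappa> y \<partial>\<mu> (fst p) (snd p)))"
    proof (intro continuous_on_mult)
      show "continuous_on S (\<lambda>p. \<kappa> (snd p))"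
        using \<kappa> continuous_on_compose2[of UNIV \<kappa> S snd] continuous_on_snd[OF continuous_on_id]
        unfolding weight_def by blast
      show "continuous_on S (\<lambda>p. \<integral> y. \<phi> y / \<kappa> y \<partial>\<mu> (fst p) (snd p))"
        using cont[OF _ C divide_weight_in_C_kappa[OF \<kappa> \<phi>], of "T + 1"] \<open>T \<ge> 0\<close>
        by (simp add: S_def case_prod_beta)
    qed
    moreover have "\<kappa> (snd p) * (\<integral> y. \<phi> y / \<kappa> y \<partial>\<mu> (fst p) (snd p)) = (\<integral> y. \<phi> y \<partial>\<nu> p)"
      if "p \<in> S" for p
    proof -
      have "sets (\<mu> (fst p) (snd p)) = sets borel"
        using mu_in[of "fst p" "snd p"] that by (auto simp: S_def M_kappa_pos_def radon_pos_def)
      from integral_density_weight_ratio[OF \<kappa> this borel_measurable_continuous_onI[OF \<phi>(1)]]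
      show ?thesis by (simp add: \<nu>_def case_prod_beta)
    qed
    ultimately show ?thesis by (rule continuous_on_eq)
  qed
  then have "continuous_map (top_of_set S) narrow_top_b \<nu>"
    by (intro continuous_map_narrow_top_bI \<nu>_in)
  moreover have "compact S" using C by (simp add: S_def compact_Times)
  ultimately have "tight (\<nu> ` S)"
    by (intro prohorov_space_tight_image[OF prohorov])
  moreover have "\<nu> ` ({0..T} \<times> C) \<subseteq> \<nu> ` S" by (auto simp: S_def)
  ultimately show ?thesis unfolding \<nu>_def by (rule tight_subset[rotated])
qed

lemma narrow_conv_kappa_kernel_at_zero:
  fixes \<kappa> :: "'a::topological_space \<Rightarrow> real" and \<mu> :: "real \<Rightarrow> 'a \<Rightarrow> 'a measure"
  assumes mu_0: "\<And>x. \<mu> 0 x = return borel x"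
    and cont: "\<And>T C \<phi>. T > 0 \<Longrightarrow> compact C \<Longrightarrow> \<phi> \<in> C_kappa \<kappa> \<Longrightarrow>
        continuous_on ({0..T} \<times> C) (\<lambda>(t, x). \<integral> y. \<phi> y \<partial>(\<mu> t x))"
    and xs: "xs \<longlonglongrightarrow> x" and ts_nonneg: "\<And>n. ts n \<ge> 0" and ts: "ts \<longlonglongrightarrow> 0"
  shows "narrow_conv_kappa \<kappa> (\<lambda>n. \<mu> (ts n) (xs n)) (return borel x)"
  unfolding narrow_conv_kappa_def
proof
  fix \<phi> assume \<phi>: "\<phi> \<in> C_kappa \<kappa>"
  define K where "K = insert x (range xs)"
  have "compactin euclidean K"
    unfolding K_def by (rule compactin_sequence_with_limit) (use xs in auto)
  then have c: "continuous_on ({0..1} \<times> K) (\<lambda>(t, x). \<integral> y. \<phi> y \<partial>(\<mu> t x))"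
    using cont[OF _ _ \<phi>] by simp
  have "\<forall>\<^sub>F n in sequentially. ts n < 1" using ts by (rule order_tendstoD) simp
  then have "\<forall>\<^sub>F n in sequentially. (ts n, xs n) \<in> {0..1} \<times> K"
    by eventually_elim (use ts_nonneg in \<open>auto simp: K_def less_imp_le\<close>)
  then have "((\<lambda>n. (\<lambda>(t, x). \<integral> y. \<phi> y \<partial>(\<mu> t x)) (ts n, xs n))
      \<longlongrightarrow> (\<lambda>(t, x). \<integral> y. \<phi> y \<partial>(\<mu> t x)) (0, x)) sequentially"
    by (intro continuous_on_tendsto_compose[OF c tendsto_Pair[OF ts xs]]) (simp_all add: K_def)
  then show "(\<lambda>n. \<integral> y. \<phi> y \<partial>(\<mu> (ts n) (xs n))) \<longlonglongrightarrow> (\<integral> y. \<phi> y \<partial>(return borel x))"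
    by (simp add: mu_0)
qed

theorem proposition3p6:
  fixes \<kappa> :: "'a::topological_space \<Rightarrow> real"
    and \<mu> :: "real \<Rightarrow> 'a \<Rightarrow> 'a measure"
  assumes E: "standing_space TYPE('a)"
    and kappa: "weight \<kappa>"
    and prohorov: "prohorov_space TYPE('a)"
    and mu_in: "\<And>t x. t \<ge> 0 \<Longrightarrow> \<mu> t x \<in> M_kappa_pos \<kappa>"
    and mu_meas: "\<And>t B. t \<ge> 0 \<Longrightarrow> B \<in> sets borel \<Longrightarrow>
                    (\<lambda>x. emeasure (\<mu> t x) B) \<in> borel_measurable borel"
    and mu_0: "\<And>x. \<mu> 0 x = return borel x"
    and bound: "\<And>T. T \<ge> 0 \<Longrightarrow>
        (SUP t\<in>{0..T}. SUP x. ennreal (\<kappa> x) * (\<integral>\<^sup>+ y. ennreal (1 / \<kappa> y) \<partial>(\<mu> t x))) < \<infinity>"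
    and cont: "\<And>T C \<phi>. T > 0 \<Longrightarrow> compact C \<Longrightarrow> \<phi> \<in> C_kappa \<kappa> \<Longrightarrow>
        continuous_on ({0..T} \<times> C) (\<lambda>(t, x). \<integral> y. \<phi> y \<partial>(\<mu> t x))"
  shows "(\<forall>T C. T \<ge> 0 \<longrightarrow> compact C \<longrightarrow>
            tight ((\<lambda>(t, x). density (\<mu> t x) (\<lambda>y. ennreal (\<kappa> x / \<kappa> y))) ` ({0..T} \<times> C)))
       \<and> (\<forall>x xs ts. xs \<longlonglongrightarrow> x \<longrightarrow> (\<forall>n. ts n \<ge> 0) \<longrightarrow> ts \<longlonglongrightarrow> 0 \<longrightarrow>
            narrow_conv_kappa \<kappa> (\<lambda>n. \<mu> (ts n) (xs n)) (return borel x))"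
proof -
  have H: "Hausdorff_space (euclidean :: 'a topology)"
    using E by (simp add: standing_space_def)
  show ?thesis
    using tight_weighted_kernel[OF H kappa prohorov mu_in cont]
      narrow_conv_kappa_kernel_at_zero[of \<mu> \<kappa>, OF mu_0 cont]
    by blast
qed

end
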